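(* Let $F$ and $H$ be two CNF formulae built over two disjoint sets of variables, and let $x$ be a variable occurring in neither of them. If both $F$ and $H$ are unsatisfiable, then $x$ is an optimal backtracking branching variable for $F +_x H = (F \vee x) \cup (H \vee \neg x)$, i.e., $x$ is the root of some minimum-size backtracking search tree of $F +_x H$.
   Context: A CNF formula is a finite set of clauses (disjunctions of literals); the empty clause is unsatisfiable. For a formula $F$ and a literal $l$, $l \vee F = F \vee l = \{ l \vee \gamma \mid \gamma \in F\}$. For a partial truth assignment $I$ (a set of literals), $F|I$ is the formula obtained by deleting every clause containing a literal true under $I$ and deleting from the remaining clauses every literal false under $I$. $Var(F)$ is the set of variables of $F$. A binary tree is either the empty tree $()$ or a triple $(x~T_1~T_2)$ with a node labelled $x$, left subtree $T_1$ and right subtree $T_2$; its size is its number of nodes. A backtracking search tree (BST) of $F$ is: the empty tree if $F$ contains the empty clause; otherwise a tree $(x~T_1~T_2)$ where $x \in Var(F)$, $T_1$ is a BST of $F|\{\neg x\}$ and $T_2$ is a BST of $F|\{x\}$. An optimal BST is a BST of minimum size. *)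

theory Defs
  imports Main
begin

datatype 'v lit = Pos 'v | Neg 'v

fun neg :: "'v lit \<Rightarrow> 'v lit" where
  "neg (Pos v) = Neg v" | "neg (Neg v) = Pos v"

fun var_of :: "'v lit \<Rightarrow> 'v" where
  "var_of (Pos v) = v" | "var_of (Neg v) = v"

type_synonym 'v clause = "'v lit set"
type_synonym 'v cnf = "'v clause set"

definition is_cnf :: "'v cnf \<Rightarrow> bool" where
  "is_cnf F \<longleftrightarrow> finite F \<and> (\<forall>C\<in>F. finite C)"

definition vars :: "'v cnf \<Rightarrow> 'v set" where
  "vars F = (\<Union>C\<in>F. var_of ` C)"

fun lit_true :: "('v \<Rightarrow> bool) \<Rightarrow> 'v lit \<Rightarrow> bool" where
  "lit_true a (Pos v) = a v" | "lit_true a (Neg v) = (\<not> a v)"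

definition satisfiable :: "'v cnf \<Rightarrow> bool" where
  "satisfiable F \<longleftrightarrow> (\<exists>a. \<forall>C\<in>F. \<exists>l\<in>C. lit_true a l)"

definition or_lit :: "'v lit \<Rightarrow> 'v cnf \<Rightarrow> 'v cnf" where
  "or_lit l F = (\<lambda>C. insert l C) ` F"

definition restrict :: "'v cnf \<Rightarrow> 'v lit set \<Rightarrow> 'v cnf" where
  "restrict F I = (\<lambda>C. C - neg ` I) ` {C \<in> F. C \<inter> I = {}}"

definition plus_x :: "'v cnf \<Rightarrow> 'v \<Rightarrow> 'v cnf \<Rightarrow> 'v cnf" where
  "plus_x F x H = or_lit (Pos x) F \<union> or_lit (Neg x) H"

datatype 'v btree = Empty | Node 'v "'v btree" "'v btree"

fun tsize :: "'v btree \<Rightarrow> nat" where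
  "tsize Empty = 0" | "tsize (Node x l r) = Suc (tsize l + tsize r)"

inductive is_bst :: "'v cnf \<Rightarrow> 'v btree \<Rightarrow> bool" where
  empty: "{} \<in> F \<Longrightarrow> is_bst F Empty"
| node: "{} \<notin> F \<Longrightarrow> x \<in> vars F \<Longrightarrow> is_bst (restrict F {Neg x}) T1
          \<Longrightarrow> is_bst (restrict F {Pos x}) T2 \<Longrightarrow> is_bst F (Node x T1 T2)"

definition optimal_bst :: "'v cnf \<Rightarrow> 'v btree \<Rightarrow> bool" where
  "optimal_bst F T \<longleftrightarrow> is_bst F T \<and> (\<forall>T'. is_bst F T' \<longrightarrow> tsize T \<le> tsize T')"

end

theory Submission
  imports Defs
begin

text \<open>
  Branching on \<open>x\<close> first splits \<open>F +\<^sub>x H\<close> into exactly \<open>F\<close> and \<open>H\<close>, so optimal trees of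
  \<open>F\<close> and \<open>H\<close> below a root \<open>x\<close> give a tree of size \<open>1 + opt F + opt H\<close>. Conversely, every
  search tree of \<open>F +\<^sub>x H\<close> contains search trees of \<open>F\<close> and of \<open>H\<close> of smaller total size.
  This is shown by induction on the tree: a root \<open>x\<close> yields them directly, while a root
  \<open>y\<close> of \<open>F\<close> leaves the \<open>H\<close>-part untouched, so the \<open>F\<close>-trees of the two subtrees
  recombine below \<open>y\<close> and only one of the two \<open>H\<close>-trees is kept (symmetrically for \<open>H\<close>).
\<close>

lemma var_of_neg [simp]: "var_of (neg l) = var_of l"
  by (cases l) auto

lemma var_of_eq_iff: "var_of l' = var_of l \<longleftrightarrow> l' = l \<or> l' = neg l"
  by (cases l; cases l') auto

lemma finite_vars: "is_cnf F \<Longrightarrow> finite (vars F)"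
  unfolding is_cnf_def vars_def by auto

lemma vars_restrict_single: "vars (restrict F {l}) \<subseteq> vars F - {var_of l}"
  unfolding vars_def restrict_def by (auto simp: var_of_eq_iff)

lemma vars_plus_x: "vars (plus_x F x H) \<subseteq> insert x (vars F \<union> vars H)"
  unfolding vars_def plus_x_def or_lit_def by auto

lemma var_in_vars_plus_x: "F \<noteq> {} \<Longrightarrow> x \<in> vars (plus_x F x H)"
  unfolding vars_def plus_x_def or_lit_def by force

lemma empty_clause_notin_plus_x: "{} \<notin> plus_x F x H"
  unfolding plus_x_def or_lit_def by auto

lemma restrict_Un: "restrict (A \<union> B) I = restrict A I \<union> restrict B I"
  unfolding restrict_def by blast

lemma lit_notin_clause: "var_of l \<notin> vars F \<Longrightarrow> C \<in> F \<Longrightarrow> l \<notin> C"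
  unfolding vars_def by blast

lemma restrict_fresh:
  assumes "var_of l \<notin> vars F"
  shows "restrict F {l} = F"
  using lit_notin_clause[OF assms] lit_notin_clause[of "neg l" F] assms
  unfolding restrict_def by force

lemma restrict_or_lit:
  assumes "var_of m \<noteq> var_of l"
  shows "restrict (or_lit m F) {l} = or_lit m (restrict F {l})"
proof -
  have "m \<noteq> l" "m \<noteq> neg l"
    using assms by auto
  then have "{C \<in> insert m ` F. C \<inter> {l} = {}} = insert m ` {C \<in> F. C \<inter> {l} = {}}"
    and "\<And>C. insert m C - neg ` {l} = insert m (C - neg ` {l})"
    by auto
  then show ?thesis
    unfolding restrict_def or_lit_def by (simp add: image_image)
qed

lemma restrict_or_lit_same: "restrict (or_lit l F) {l} = {}"
  unfolding restrict_def or_lit_def by auto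

lemma restrict_or_lit_neg:
  assumes "var_of l \<notin> vars F"
  shows "restrict (or_lit (neg l) F) {l} = F"
proof -
  have "l \<notin> C" "neg l \<notin> C" if "C \<in> F" for C
    using lit_notin_clause[of _ F C] assms that by simp_all
  moreover have "neg l \<noteq> l"
    by (cases l) auto
  ultimately have "{C \<in> insert (neg l) ` F. C \<inter> {l} = {}} = insert (neg l) ` F"
    and "(\<lambda>C. insert (neg l) C - neg ` {l}) ` F = (\<lambda>C. C) ` F"
    by (auto intro!: image_cong)
  then show ?thesis
    unfolding restrict_def or_lit_def by (simp add: image_image)
qed

lemma restrict_plus_x_Neg:
  assumes "x \<notin> vars F"
  shows "restrict (plus_x F x H) {Neg x} = F"
  using restrict_or_lit_neg[of "Neg x" F] restrict_or_lit_same[of "Neg x" H] assms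
  unfolding plus_x_def restrict_Un by simp

lemma restrict_plus_x_Pos:
  assumes "x \<notin> vars H"
  shows "restrict (plus_x F x H) {Pos x} = H"
  using restrict_or_lit_neg[of "Pos x" H] restrict_or_lit_same[of "Pos x" F] assms
  unfolding plus_x_def restrict_Un by simp

lemma restrict_plus_x_left:
  assumes "var_of l \<noteq> x" "var_of l \<notin> vars H"
  shows "restrict (plus_x F x H) {l} = plus_x (restrict F {l}) x H"
  using assms unfolding plus_x_def restrict_Un
  by (simp add: restrict_or_lit restrict_fresh)

lemma restrict_plus_x_right:
  assumes "var_of l \<noteq> x" "var_of l \<notin> vars F"
  shows "restrict (plus_x F x H) {l} = plus_x F x (restrict H {l})"
  using assms unfolding plus_x_def restrict_Un
  by (simp add: restrict_or_lit restrict_fresh)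

lemma is_bst_of_branches:
  assumes "y \<in> vars F" "is_bst (restrict F {Neg y}) T1" "is_bst (restrict F {Pos y}) T2"
  obtains T where "is_bst F T" "tsize T \<le> Suc (tsize T1 + tsize T2)"
proof (cases "{} \<in> F")
  case True
  then show ?thesis
    by (intro that[of Empty]) (simp_all add: is_bst.empty)
next
  case False
  with assms show ?thesis
    by (intro that[of "Node y T1 T2"] is_bst.node) simp_all
qed

definition smaller_bst_pair :: "'v cnf \<Rightarrow> 'v cnf \<Rightarrow> 'v btree \<Rightarrow> bool" where
  "smaller_bst_pair F H T \<longleftrightarrow>
    (\<exists>TF TH. is_bst F TF \<and> is_bst H TH \<and> tsize TF + tsize TH < tsize T)"

lemma smaller_bst_pair_commute: "smaller_bst_pair H F T = smaller_bst_pair F H T"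
  unfolding smaller_bst_pair_def by (metis add.commute)

lemma smaller_bst_pair_Node:
  assumes "y \<in> vars F"
    and "smaller_bst_pair (restrict F {Neg y}) H T1" "smaller_bst_pair (restrict F {Pos y}) H T2"
  shows "smaller_bst_pair F H (Node y T1 T2)"
proof -
  obtain TF1 TH where TF1: "is_bst (restrict F {Neg y}) TF1" and TH: "is_bst H TH"
    and size1: "tsize TF1 + tsize TH < tsize T1"
    using assms(2) unfolding smaller_bst_pair_def by blast
  obtain TF2 where TF2: "is_bst (restrict F {Pos y}) TF2" and size2: "tsize TF2 < tsize T2"
    using assms(3) unfolding smaller_bst_pair_def by fastforce
  obtain TF where "is_bst F TF" "tsize TF \<le> Suc (tsize TF1 + tsize TF2)"
    using is_bst_of_branches[OF assms(1) TF1 TF2] .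
  with TH size1 size2 show ?thesis
    unfolding smaller_bst_pair_def by (intro exI[of _ TF] exI[of _ TH]) simp
qed

lemma bst_plus_x_smaller_bst_pair:
  assumes "is_bst (plus_x F x H) T"
    and "vars F \<inter> vars H = {}" "x \<notin> vars F" "x \<notin> vars H"
  shows "smaller_bst_pair F H T"
  using assms
proof (induction "plus_x F x H" T arbitrary: F H rule: is_bst.induct)
  case empty
  then show ?case
    by (simp add: empty_clause_notin_plus_x)
next
  case (node y T1 T2)
  note IH_Neg = node.hyps(4) and IH_Pos = node.hyps(6)
  from node.hyps(2) vars_plus_x[of F x H]
  consider "y = x" | "y \<in> vars F" "y \<noteq> x" | "y \<in> vars H" "y \<noteq> x"
    by blast
  then show ?case
  proof cases
    case 1
    then have "is_bst F T1" "is_bst H T2"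
      using node.hyps(3,5) restrict_plus_x_Neg[OF node.prems(2)] restrict_plus_x_Pos[OF node.prems(3)]
      by simp_all
    then show ?thesis
      unfolding smaller_bst_pair_def by (intro exI[of _ T1] exI[of _ T2]) simp
  next
    case 2
    with node.prems(1) have "y \<notin> vars H"
      by blast
    with 2 have split: "restrict (plus_x F x H) {l} = plus_x (restrict F {l}) x H"
      if "var_of l = y" for l
      using that by (intro restrict_plus_x_left) simp_all
    have disj: "vars (restrict F {l}) \<inter> vars H = {}" "x \<notin> vars (restrict F {l})"
      if "var_of l = y" for l
      using that node.prems vars_restrict_single[of F l] by blast+
    have "smaller_bst_pair (restrict F {Neg y}) H T1" "smaller_bst_pair (restrict F {Pos y}) H T2"
      by (rule IH_Neg IH_Pos; simp add: split disj node.prems)+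
    with 2(1) show ?thesis
      by (rule smaller_bst_pair_Node)
  next
    case 3
    with node.prems(1) have "y \<notin> vars F"
      by blast
    with 3 have split: "restrict (plus_x F x H) {l} = plus_x F x (restrict H {l})"
      if "var_of l = y" for l
      using that by (intro restrict_plus_x_right) simp_all
    have disj: "vars F \<inter> vars (restrict H {l}) = {}" "x \<notin> vars (restrict H {l})"
      if "var_of l = y" for l
      using that node.prems vars_restrict_single[of H l] by blast+
    have "smaller_bst_pair F (restrict H {Neg y}) T1" "smaller_bst_pair F (restrict H {Pos y}) T2"
      by (rule IH_Neg IH_Pos; simp add: split disj node.prems)+
    with 3(1) have "smaller_bst_pair H F (Node y T1 T2)"
      by (intro smaller_bst_pair_Node) (simp_all add: smaller_bst_pair_commute)
    then show ?thesis
      by (simp add: smaller_bst_pair_commute)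
  qed
qed

lemma restrict_unsat:
  assumes "\<not> satisfiable F"
  shows "\<not> satisfiable (restrict F {l})"
proof
  assume "satisfiable (restrict F {l})"
  then obtain a where a: "\<forall>C\<in>restrict F {l}. \<exists>m\<in>C. lit_true a m"
    unfolding satisfiable_def by blast
  define a' where "a' = a(var_of l := lit_true (\<lambda>_. True) l)"
  have "\<exists>m\<in>C. lit_true a' m" if C: "C \<in> F" for C
  proof (cases "l \<in> C")
    case True
    moreover have "lit_true a' l"
      unfolding a'_def by (cases l) auto
    ultimately show ?thesis ..
  next
    case False
    with C have "C - {neg l} \<in> restrict F {l}"
      unfolding restrict_def by auto
    then obtain m where m: "m \<in> C" "m \<noteq> neg l" "lit_true a m"
      using a by blast
    with False have "var_of m \<noteq> var_of l"
      by (auto simp: var_of_eq_iff)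
    then have "lit_true a' m = lit_true a m"
      unfolding a'_def by (cases m) auto
    with m show ?thesis
      by blast
  qed
  with assms show False
    unfolding satisfiable_def by blast
qed

lemma empty_clause_if_unsat_no_vars:
  assumes "\<not> satisfiable F" "vars F = {}"
  shows "{} \<in> F"
proof -
  obtain C where "C \<in> F"
    using assms(1) unfolding satisfiable_def by blast
  with assms(2) show ?thesis
    unfolding vars_def by auto
qed

lemma is_bst_exists_if_vars_subset:
  assumes "finite V" "vars F \<subseteq> V" "\<not> satisfiable F"
  shows "\<exists>T. is_bst F T"
  using assms
proof (induction V arbitrary: F rule: finite_induct)
  case empty
  then have "{} \<in> F"
    by (intro empty_clause_if_unsat_no_vars) auto
  then show ?case
    by (blast intro: is_bst.empty)
next
  case (insert y V)
  show ?case
  proof (cases "y \<in> vars F")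
    case False
    with insert.prems(1) have "vars F \<subseteq> V"
      by blast
    then show ?thesis
      using insert.IH insert.prems(2) by blast
  next
    case True
    have "\<exists>T. is_bst (restrict F {l}) T" if "var_of l = y" for l
    proof (rule insert.IH)
      show "vars (restrict F {l}) \<subseteq> V"
        using vars_restrict_single[of F l] insert.prems(1) that by blast
      show "\<not> satisfiable (restrict F {l})"
        using insert.prems(2) by (rule restrict_unsat)
    qed
    then obtain T1 T2 where "is_bst (restrict F {Neg y}) T1" "is_bst (restrict F {Pos y}) T2"
      by fastforce
    with True show ?thesis
      by (metis is_bst_of_branches)
  qed
qed

lemma optimal_bst_exists:
  assumes "is_cnf F" "\<not> satisfiable F"
  shows "\<exists>T. optimal_bst F T"
proof -
  obtain T where "is_bst F T"
    using is_bst_exists_if_vars_subset[OF finite_vars[OF assms(1)] order_refl assms(2)] by blast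
  then show ?thesis
    using ex_has_least_nat[of "is_bst F" T tsize] unfolding optimal_bst_def by blast
qed

lemma is_bst_nonempty: "is_bst F T \<Longrightarrow> F \<noteq> {}"
  by (cases rule: is_bst.cases) (auto simp: vars_def)

lemma is_bst_plus_x_root:
  assumes "is_bst F TF" "is_bst H TH" "x \<notin> vars F" "x \<notin> vars H"
  shows "is_bst (plus_x F x H) (Node x TF TH)"
proof (rule is_bst.node)
  show "{} \<notin> plus_x F x H"
    by (rule empty_clause_notin_plus_x)
  show "x \<in> vars (plus_x F x H)"
    using is_bst_nonempty[OF assms(1)] by (rule var_in_vars_plus_x)
  show "is_bst (restrict (plus_x F x H) {Neg x}) TF"
    unfolding restrict_plus_x_Neg[OF assms(3)] by (rule assms(1))
  show "is_bst (restrict (plus_x F x H) {Pos x}) TH"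
    unfolding restrict_plus_x_Pos[OF assms(4)] by (rule assms(2))
qed

theorem lemma4:
  fixes F H :: "'v cnf" and x :: 'v
  assumes "is_cnf F" and "is_cnf H"
    and "vars F \<inter> vars H = {}"
    and "x \<notin> vars F" and "x \<notin> vars H"
    and "\<not> satisfiable F" and "\<not> satisfiable H"
  shows "\<exists>T1 T2. optimal_bst (plus_x F x H) (Node x T1 T2)"
proof -
  obtain TF TH where TF: "optimal_bst F TF" and TH: "optimal_bst H TH"
    using optimal_bst_exists[OF assms(1,6)] optimal_bst_exists[OF assms(2,7)] by blast
  have "is_bst (plus_x F x H) (Node x TF TH)"
    using TF TH assms(4,5) unfolding optimal_bst_def by (blast intro: is_bst_plus_x_root)
  moreover have "tsize (Node x TF TH) \<le> tsize T" if T: "is_bst (plus_x F x H) T" for T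
  proof -
    obtain TF' TH' where "is_bst F TF'" "is_bst H TH'" "tsize TF' + tsize TH' < tsize T"
      using bst_plus_x_smaller_bst_pair[OF T assms(3-5)] unfolding smaller_bst_pair_def by blast
    with TF TH show ?thesis
      unfolding optimal_bst_def by fastforce
  qed
  ultimately show ?thesis
    unfolding optimal_bst_def by blast
qed

end
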